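(* Let $\Psi$ be a commuting interaction on a finite graph $\Lambda$. For all $X\subset\Lambda'\subset\Lambda$, all $A\in\mathcal{A}_X$ and all $t\in\mathbb{R}$, $$\big\|\tau^\Lambda_t(A)-\tau^{\Lambda'}_t(A)\big\|\le 2\,\|A\|\,|t|\sum_{\substack{Z\subset\Lambda:\ Z\cap X\neq\emptyset,\\ Z\cap(\Lambda\setminus\Lambda')\neq\emptyset}}\|\Psi(Z)\|.$$ Moreover, if $\|\Psi\|_F<\infty$ for some decaying function $F:[0,\infty)\to(0,\infty)$, then $$\big\|\tau^\Lambda_t(A)-\tau^{\Lambda'}_t(A)\big\|\le 2\,\|A\|\,\|\Psi\|_F\,|t|\sum_{x\in X}\sum_{y\in\Lambda\setminus\Lambda'}F(d(x,y)).$$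
   Context: $\Lambda$ has graph distance $d$. Each site carries $\mathbb{C}^q$, $\mathcal{A}_Z=\mathcal{B}(\bigotimes_{x\in Z}\mathbb{C}^q)$ embedded in $\mathcal{A}_\Lambda$ via $A\mapsto A\otimes\mathbf{1}$. An interaction assigns to each $Z\subset\Lambda$ a self-adjoint $\Psi(Z)\in\mathcal{A}_Z$; commuting means $[\Psi(Z),\Psi(Z')]=0$ for all $Z,Z'$. $\|\Psi\|_F=\sup_{x,y\in\Lambda}\sum_{Z\ni x,y}\|\Psi(Z)\|/F(d(x,y))$. For $\Lambda'\subset\Lambda$, $H_{\Lambda'}=\sum_{Z\subset\Lambda'}\Psi(Z)$ and $\tau^{\Lambda'}_t(A)=e^{itH_{\Lambda'}}Ae^{-itH_{\Lambda'}}$. *)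

theory Defs
  imports "HOL-Analysis.Analysis"
begin

(* Quantum spin system on a finite vertex set Lambda = UNIV :: 'v set (with 'v finite).
   Single-site space C^q with q = CARD('q); the total Hilbert space
   (tensor product over all sites) is complex ^ ('v => 'q), i.e. functions on
   configurations sigma :: 'v => 'q, with its l2 (Hilbert) norm. *)

type_synonym ('v, 'q) op = "complex ^ ('v \<Rightarrow> 'q) ^ ('v \<Rightarrow> 'q)"

definition opnorm :: "('v::finite, 'q::finite) op \<Rightarrow> real" where
  "opnorm A = onorm (\<lambda>x. A *v x)"

definition adj :: "('v::finite, 'q::finite) op \<Rightarrow> ('v, 'q) op" where
  "adj A = (\<chi> i j. cnj (A $ j $ i))"

definition self_adjoint :: "('v::finite, 'q::finite) op \<Rightarrow> bool" where
  "self_adjoint A \<longleftrightarrow> adj A = A"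

definition csmul :: "complex \<Rightarrow> ('v::finite, 'q::finite) op \<Rightarrow> ('v, 'q) op" where
  "csmul c A = (\<chi> i j. c * A $ i $ j)"

fun opow :: "('v::finite, 'q::finite) op \<Rightarrow> nat \<Rightarrow> ('v, 'q) op" where
  "opow A 0 = mat 1"
| "opow A (Suc n) = A ** opow A n"

definition mexp :: "('v::finite, 'q::finite) op \<Rightarrow> ('v, 'q) op" where
  "mexp A = (\<Sum>n. (1 / fact n) *\<^sub>R opow A n)"

(* A \<in> A_Z, i.e. A = a \<otimes> 1 with a acting on the sites in Z:
   matrix entries vanish unless the configurations agree off Z, and
   depend only on the restrictions of the configurations to Z. *)
definition local_op :: "'v set \<Rightarrow> ('v::finite, 'q::finite) op \<Rightarrow> bool" where
  "local_op Z A \<longleftrightarrow>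
     (\<forall>\<sigma> \<tau>. (\<exists>v. v \<notin> Z \<and> \<sigma> v \<noteq> \<tau> v) \<longrightarrow> A $ \<sigma> $ \<tau> = 0) \<and>
     (\<forall>\<sigma> \<tau> \<sigma>' \<tau>'. (\<forall>v\<in>Z. \<sigma> v = \<sigma>' v \<and> \<tau> v = \<tau>' v) \<and>
        (\<forall>v. v \<notin> Z \<longrightarrow> \<sigma> v = \<tau> v \<and> \<sigma>' v = \<tau>' v) \<longrightarrow> A $ \<sigma> $ \<tau> = A $ \<sigma>' $ \<tau>')"

definition interaction :: "('v::finite set \<Rightarrow> ('v, 'q::finite) op) \<Rightarrow> bool" where
  "interaction \<Psi> \<longleftrightarrow> (\<forall>Z. local_op Z (\<Psi> Z) \<and> self_adjoint (\<Psi> Z))"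

definition commuting :: "('v::finite set \<Rightarrow> ('v, 'q::finite) op) \<Rightarrow> bool" where
  "commuting \<Psi> \<longleftrightarrow> (\<forall>Z Z'. \<Psi> Z ** \<Psi> Z' = \<Psi> Z' ** \<Psi> Z)"

definition ham :: "('v::finite set \<Rightarrow> ('v, 'q::finite) op) \<Rightarrow> 'v set \<Rightarrow> ('v, 'q) op" where
  "ham \<Psi> L = (\<Sum>Z\<in>{Z. Z \<subseteq> L}. \<Psi> Z)"

definition dyn :: "('v::finite set \<Rightarrow> ('v, 'q::finite) op) \<Rightarrow> 'v set \<Rightarrow> real \<Rightarrow> ('v, 'q) op \<Rightarrow> ('v, 'q) op" where
  "dyn \<Psi> L t A =
     mexp (csmul (\<i> * complex_of_real t) (ham \<Psi> L)) ** A **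
     mexp (csmul (- (\<i> * complex_of_real t)) (ham \<Psi> L))"

(* ||Psi||_F (finite graph: supremum is a maximum) *)
definition F_norm :: "('v::finite set \<Rightarrow> ('v, 'q::finite) op) \<Rightarrow> ('v \<Rightarrow> 'v \<Rightarrow> real) \<Rightarrow> (real \<Rightarrow> real) \<Rightarrow> real" where
  "F_norm \<Psi> d F = (MAX p \<in> (UNIV :: ('v \<times> 'v) set).
      (\<Sum>Z\<in>{Z. fst p \<in> Z \<and> snd p \<in> Z}. opnorm (\<Psi> Z)) / F (d (fst p) (snd p)))"

(* decaying function on a finite graph: positive and non-increasing on [0,inf)
   (the integrability / convolution conditions are automatic on finite graphs) *)
definition decaying :: "(real \<Rightarrow> real) \<Rightarrow> bool" where
  "decaying F \<longleftrightarrow> (\<forall>r\<ge>0. F r > 0) \<and> (\<forall>r s. 0 \<le> r \<longrightarrow> r \<le> s \<longrightarrow> F s \<le> F r)"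

end

theory Submission
  imports Defs
begin

text \<open>All terms of a commuting interaction commute, so \<open>e\<^sup>i\<^sup>t\<^sup>H\<close> for \<open>H = H\<^sub>\<Lambda>\<close> factors as
  \<open>e\<^sup>i\<^sup>t\<^sup>H\<^sup>' e\<^sup>i\<^sup>t\<^sup>B e\<^sup>i\<^sup>t\<^sup>R\<close>, where \<open>H' = H\<^sub>\<Lambda>\<^sub>'\<close>, \<open>B\<close> collects the terms meeting both \<open>X\<close> and
  \<open>\<Lambda> - \<Lambda>'\<close>, and \<open>R\<close> the remaining terms not inside \<open>\<Lambda>'\<close>. These are disjoint from \<open>X\<close> and
  commute with \<open>A\<close>, hence \<open>\<tau>\<^sup>\<Lambda>\<^sub>t(A) = \<tau>\<^sup>\<Lambda>\<^sup>'\<^sub>t(e\<^sup>i\<^sup>t\<^sup>B A e\<^sup>-\<^sup>i\<^sup>t\<^sup>B)\<close>. Since \<open>e\<^sup>i\<^sup>t\<^sup>H\<^sup>'\<close> is unitary,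
  the difference has the norm of \<open>e\<^sup>i\<^sup>t\<^sup>B A e\<^sup>-\<^sup>i\<^sup>t\<^sup>B - A\<close>, at most \<open>2 |t| \<parallel>A\<parallel> \<parallel>B\<parallel>\<close>.
  For the second bound, each term \<open>\<Psi>(Z)\<close> of \<open>B\<close> is charged to the pairs \<open>x \<in> Z \<inter> X\<close>,
  \<open>y \<in> Z - \<Lambda>'\<close>, and for each pair the terms containing both are bounded by \<open>\<parallel>\<Psi>\<parallel>\<^sub>F F(d(x,y))\<close>.\<close>

section \<open>A Banach algebra of operators\<close>

text \<open>The library's bounded linear maps carry no ring structure. Wrapped in a type of their own,
  with composition as product, they form a Banach algebra, in which \<^const>\<open>exp\<close> and its
  derivative are available.\<close>

typedef (overloaded) 'a endo = "UNIV :: ('a::euclidean_space \<Rightarrow>\<^sub>L 'a) set" ..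

declare Rep_endo_inverse [simp] Abs_endo_inverse [simplified, simp]

instantiation endo :: (euclidean_space) real_vector
begin
definition "0 = Abs_endo 0"
definition "x + y = Abs_endo (Rep_endo x + Rep_endo y)"
definition "x - y = Abs_endo (Rep_endo x - Rep_endo y)"
definition "- x = Abs_endo (- Rep_endo x)"
definition "r *\<^sub>R x = Abs_endo (r *\<^sub>R Rep_endo x)"
instance
  by standard (simp_all add: zero_endo_def plus_endo_def minus_endo_def uminus_endo_def
      scaleR_endo_def Rep_endo_inject [symmetric] algebra_simps scaleR_add_right scaleR_add_left)
end

lemma Rep_endo_zero [simp]: "Rep_endo 0 = 0"
  and Rep_endo_add [simp]: "Rep_endo (x + y) = Rep_endo x + Rep_endo y"
  and Rep_endo_diff [simp]: "Rep_endo (x - y) = Rep_endo x - Rep_endo y"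
  and Rep_endo_scaleR [simp]: "Rep_endo (r *\<^sub>R x) = r *\<^sub>R Rep_endo x"
  by (simp_all add: zero_endo_def plus_endo_def minus_endo_def uminus_endo_def scaleR_endo_def)

instantiation endo :: (euclidean_space) real_normed_algebra_1
begin
definition "norm x = norm (Rep_endo x)"
definition "sgn (x :: 'a endo) = inverse (norm x) *\<^sub>R x"
definition "dist (x :: 'a endo) y = norm (x - y)"
definition "(uniformity :: ('a endo \<times> 'a endo) filter) =
  (INF e\<in>{0 <..}. principal {(x, y). dist x y < e})"
definition "open (S :: 'a endo set) = (\<forall>x\<in>S. \<forall>\<^sub>F (x', y) in uniformity. x' = x \<longrightarrow> y \<in> S)"
definition "x * y = Abs_endo (Rep_endo x o\<^sub>L Rep_endo y)"
definition "1 = Abs_endo id_blinfun"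
instance
proof
  have "(id_blinfun :: 'a \<Rightarrow>\<^sub>L 'a) \<noteq> 0"
    by (metis norm_blinfun_id norm_zero zero_neq_one)
  then show "(0 :: 'a endo) \<noteq> 1"
    by (simp add: zero_endo_def one_endo_def Abs_endo_inject)
qed (auto simp: norm_endo_def sgn_endo_def dist_endo_def uniformity_endo_def open_endo_def
      times_endo_def one_endo_def Rep_endo_inject [symmetric] norm_triangle_ineq
      norm_blinfun_compose blinfun.bilinear_simps intro!: blinfun_eqI)
end

lemma Rep_endo_mult [simp]: "Rep_endo (x * y) = Rep_endo x o\<^sub>L Rep_endo y"
  and Rep_endo_one [simp]: "Rep_endo 1 = id_blinfun"
  by (simp_all add: times_endo_def one_endo_def)

instance endo :: (euclidean_space) banach
proof
  fix X :: "nat \<Rightarrow> 'a endo"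
  assume "Cauchy X"
  then have "Cauchy (\<lambda>n. Rep_endo (X n))"
    by (simp add: Cauchy_def dist_endo_def norm_endo_def dist_norm)
  then obtain l where "(\<lambda>n. Rep_endo (X n)) \<longlonglongrightarrow> l"
    by (auto simp: Cauchy_convergent_iff convergent_def)
  then have "X \<longlonglongrightarrow> Abs_endo l"
    by (simp add: lim_sequentially dist_endo_def norm_endo_def dist_norm)
  then show "convergent X"
    by (auto simp: convergent_def)
qed

section \<open>Conjugation by exponentials\<close>

lemma exp_mult_commute:
  fixes x y :: "'a::{real_normed_algebra_1,banach}"
  assumes "x * y = y * x"
  shows "exp x * y = y * exp x"
proof -
  have "exp x * y = (\<Sum>n. x ^ n /\<^sub>R fact n * y)"
    unfolding exp_def by (rule suminf_mult2 [OF summable_exp_generic])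
  also have "\<dots> = (\<Sum>n. y * (x ^ n /\<^sub>R fact n))"
    using power_commuting_commutes [OF assms] by simp
  also have "\<dots> = y * exp x"
    unfolding exp_def by (rule suminf_mult [OF summable_exp_generic])
  finally show ?thesis .
qed

lemma sum_mult_sum_commute:
  fixes f g :: "_ \<Rightarrow> 'a::semiring_0"
  assumes "\<And>x y. x \<in> S \<Longrightarrow> y \<in> T \<Longrightarrow> f x * g y = g y * f x"
  shows "sum f S * sum g T = sum g T * sum f S"
  by (simp add: sum_distrib_left sum_distrib_right assms sum.swap [of _ S T])

text \<open>The derivative of \<open>s \<mapsto> e\<^sup>s\<^sup>m a e\<^sup>-\<^sup>s\<^sup>m\<close> is \<open>e\<^sup>s\<^sup>m (m a - a m) e\<^sup>-\<^sup>s\<^sup>m\<close>, of norm at most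
  \<open>2 \<parallel>a\<parallel> \<parallel>m\<parallel>\<close>; the mean value inequality on \<open>[0, 1]\<close> does the rest.\<close>

lemma norm_exp_conj_diff_le:
  fixes m a :: "'a::{real_normed_algebra_1,banach}"
  assumes contraction: "\<And>s::real. norm (exp (s *\<^sub>R m)) \<le> 1"
  shows "norm (exp m * a * exp (- m) - a) \<le> 2 * norm a * norm m"
proof -
  define f where "f s = exp (s *\<^sub>R m) * a * exp (s *\<^sub>R - m)" for s :: real
  define f' where "f' s = exp (s *\<^sub>R m) * (m * a - a * m) * exp (s *\<^sub>R - m)" for s :: real
  have "(f has_vector_derivative f' s) (at s within {0..1})" for s
  proof -
    have "(f has_vector_derivative
        exp (s *\<^sub>R m) * a * (exp (s *\<^sub>R - m) * - m) + exp (s *\<^sub>R m) * m * a * exp (s *\<^sub>R - m))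
        (at s within {0..1})"
      unfolding f_def
      by (intro has_vector_derivative_mult has_vector_derivative_mult_left
          exp_scaleR_has_vector_derivative_right)
    moreover have "exp (s *\<^sub>R - m) * - m = - m * exp (s *\<^sub>R - m)"
      by (rule exp_times_scaleR_commute)
    ultimately show ?thesis
      by (simp add: f'_def algebra_simps)
  qed
  then have "(f has_derivative (\<lambda>h. h *\<^sub>R f' s)) (at s within {0..1})" for s
    by (simp add: has_vector_derivative_def)
  moreover have "onorm (\<lambda>h. h *\<^sub>R f' s) \<le> 2 * norm a * norm m" for s
  proof (rule onorm_le)
    fix h :: real
    have "norm (f' s) \<le> norm (exp (s *\<^sub>R m)) * norm (m * a - a * m) * norm (exp (s *\<^sub>R - m))"
      unfolding f'_def by (meson norm_mult_ineq order_trans mult_right_mono norm_ge_zero)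
    also have "\<dots> \<le> 1 * norm (m * a - a * m) * 1"
      using contraction [of s] contraction [of "- s"] by (intro mult_mono) auto
    also have "\<dots> \<le> 2 * norm a * norm m"
      using norm_triangle_ineq4 [of "m * a" "a * m"] norm_mult_ineq [of m a] norm_mult_ineq [of a m]
      by (simp add: mult.commute [of "norm m"])
    finally show "norm (h *\<^sub>R f' s) \<le> 2 * norm a * norm m * norm h"
      by (simp add: mult.commute mult_left_mono)
  qed
  ultimately have "norm (f 1 - f 0) \<le> 2 * norm a * norm m * norm (1 - 0 :: real)"
    by (intro differentiable_bound [of "{0..1}"]) auto
  then show ?thesis
    by (simp add: f_def)
qed

lemma exp_conj_split_commuting:
  fixes x y z a :: "'a::{real_normed_algebra_1,banach}"
  assumes "x * y = y * x" "x * z = z * x" "y * z = z * y" and "a * z = z * a"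
  shows "exp (x + y + z) * a * exp (- (x + y + z)) = exp x * (exp y * a * exp (- y)) * exp (- x)"
proof -
  have "exp (x + y + z) = exp x * exp y * exp z"
    using assms(1-3) by (simp add: exp_add_commuting distrib_left distrib_right)
  moreover have "exp (- (x + y + z)) = exp (- z) * exp (- y) * exp (- x)"
  proof -
    have zy: "- z * - y = - y * - z" and zyx: "(- z + - y) * - x = - x * (- z + - y)"
      using assms(1-3) by (simp_all add: algebra_simps)
    have "exp (- (x + y + z)) = exp (- z + - y + - x)"
      by (simp add: algebra_simps)
    also have "\<dots> = exp (- z + - y) * exp (- x)"
      by (rule exp_add_commuting [OF zyx])
    finally show ?thesis
      by (simp only: exp_add_commuting [OF zy])
  qed
  moreover have "exp z * a = a * exp z"
    using assms(4) by (simp add: exp_mult_commute)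
  moreover have "exp z * exp (- z) = 1"
    by (rule exp_minus_inverse)
  ultimately show ?thesis
    by (simp add: mult.assoc) (metis mult.assoc mult_1_left)
qed

lemma norm_exp_conj_perturbation_le:
  fixes x y z a :: "'a::{real_normed_algebra_1,banach}"
  assumes "x * y = y * x" "x * z = z * x" "y * z = z * y" and "a * z = z * a"
    and contraction_x: "\<And>s::real. norm (exp (s *\<^sub>R x)) \<le> 1"
    and contraction_y: "\<And>s::real. norm (exp (s *\<^sub>R y)) \<le> 1"
  shows "norm (exp (x + y + z) * a * exp (- (x + y + z)) - exp x * a * exp (- x))
    \<le> 2 * norm a * norm y"
proof -
  have "norm (exp (x + y + z) * a * exp (- (x + y + z)) - exp x * a * exp (- x))
      = norm (exp x * (exp y * a * exp (- y) - a) * exp (- x))"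
    unfolding exp_conj_split_commuting [OF assms(1-4)] by (simp add: algebra_simps)
  also have "\<dots> \<le> norm (exp x) * norm (exp y * a * exp (- y) - a) * norm (exp (- x))"
    by (meson norm_mult_ineq order_trans mult_right_mono norm_ge_zero)
  also have "\<dots> \<le> 1 * norm (exp y * a * exp (- y) - a) * 1"
    using contraction_x [of 1] contraction_x [of "- 1"] by (intro mult_mono) auto
  also have "\<dots> \<le> 2 * norm a * norm y"
    using norm_exp_conj_diff_le [OF contraction_y] by simp
  finally show ?thesis .
qed

section \<open>Matrices as operators\<close>

lemma bounded_linear_matrix_vector_mult:
  "bounded_linear (\<lambda>x :: complex ^ 'n. (M :: complex ^ 'n ^ 'm) *v x)"
  by (simp add: linear_conv_bounded_linear)

definition endo_of_mat :: "complex ^ 'n ^ 'n \<Rightarrow> (complex ^ 'n :: finite) endo" where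
  "endo_of_mat M = Abs_endo (Blinfun (\<lambda>x. M *v x))"

text \<open>Only a left inverse of \<^const>\<open>endo_of_mat\<close>: elements of \<^typ>\<open>'a endo\<close> are merely
  real-linear.\<close>

definition mat_of_endo :: "(complex ^ 'n :: finite) endo \<Rightarrow> complex ^ 'n ^ 'n" where
  "mat_of_endo T = matrix (blinfun_apply (Rep_endo T))"

lemma blinfun_apply_endo_of_mat [simp]: "blinfun_apply (Rep_endo (endo_of_mat M)) = (\<lambda>x. M *v x)"
  by (simp add: endo_of_mat_def bounded_linear_Blinfun_apply [OF bounded_linear_matrix_vector_mult])

lemma endo_eqI: "(\<And>x. blinfun_apply (Rep_endo S) x = blinfun_apply (Rep_endo T) x) \<Longrightarrow> S = T"
  by (metis blinfun_eqI Rep_endo_inject)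

lemma mat_of_endo_of_mat [simp]: "mat_of_endo (endo_of_mat M) = M"
  by (simp add: mat_of_endo_def)

lemma endo_of_mat_inject: "endo_of_mat M = endo_of_mat N \<longleftrightarrow> M = N"
  by (metis mat_of_endo_of_mat)

lemma endo_of_mat_mult: "endo_of_mat (M ** N) = endo_of_mat M * endo_of_mat N"
  and endo_of_mat_one: "endo_of_mat (mat 1) = 1"
  and endo_of_mat_add: "endo_of_mat (M + N) = endo_of_mat M + endo_of_mat N"
  and endo_of_mat_diff: "endo_of_mat (M - N) = endo_of_mat M - endo_of_mat N"
  by (auto intro!: endo_eqI simp: matrix_vector_mul_assoc blinfun.bilinear_simps
      matrix_vector_mult_add_rdistrib matrix_vector_mult_diff_rdistrib)

lemma endo_of_mat_scaleR: "endo_of_mat (r *\<^sub>R M) = r *\<^sub>R endo_of_mat M"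
  by (rule endo_eqI) (simp add: blinfun.bilinear_simps vec_eq_iff matrix_vector_mult_def scaleR_sum_right)

lemma endo_of_mat_minus: "endo_of_mat (- M) = - endo_of_mat M"
  using endo_of_mat_diff [of 0 M] endo_of_mat_diff [of 0 0] by simp

lemma endo_of_mat_sum: "endo_of_mat (sum f S) = (\<Sum>x\<in>S. endo_of_mat (f x))"
  using endo_of_mat_diff [of 0 0]
  by (induction S rule: infinite_finite_induct) (simp_all add: endo_of_mat_add)

lemma bounded_linear_endo_of_mat: "bounded_linear endo_of_mat"
  using linear_conv_bounded_linear linearI endo_of_mat_add endo_of_mat_scaleR by blast

lemma bounded_linear_mat_of_endo:
  "bounded_linear (mat_of_endo :: (complex ^ 'n :: finite) endo \<Rightarrow> _)"
proof (rule bounded_linear_intro [where K = "real CARD('n) * real CARD('n)"])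
  fix S T :: "(complex ^ 'n) endo" and r :: real
  show "mat_of_endo (S + T) = mat_of_endo S + mat_of_endo T"
    and "mat_of_endo (r *\<^sub>R T) = r *\<^sub>R mat_of_endo T"
    by (simp_all add: mat_of_endo_def matrix_def vec_eq_iff blinfun.bilinear_simps)
  have entry: "norm (mat_of_endo T $ i $ j) \<le> norm T" for i j
  proof -
    have "norm (mat_of_endo T $ i $ j) \<le> norm (blinfun_apply (Rep_endo T) (axis j 1))"
      by (simp add: mat_of_endo_def matrix_def Finite_Cartesian_Product.norm_nth_le)
    also have "\<dots> \<le> norm T * norm (axis j (1 :: complex))"
      unfolding norm_endo_def by (rule norm_blinfun)
    finally show ?thesis
      by (simp add: Basis_complex_def)
  qed
  have "norm (mat_of_endo T) \<le> (\<Sum>i\<in>UNIV. \<Sum>j\<in>UNIV. norm (mat_of_endo T $ i $ j))"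
  proof -
    have l1: "norm v \<le> (\<Sum>i\<in>UNIV. norm (v $ i))" for v :: "'b::real_normed_vector ^ 'n"
      by (simp add: norm_vec_def L2_set_le_sum)
    show ?thesis
      by (intro order_trans [OF l1] sum_mono l1)
  qed
  also have "\<dots> \<le> (\<Sum>i\<in>(UNIV :: 'n set). \<Sum>j\<in>(UNIV :: 'n set). norm T)"
    by (intro sum_mono entry)
  finally show "norm (mat_of_endo T) \<le> norm T * (real CARD('n) * real CARD('n))"
    by (simp add: algebra_simps)
qed

lemma opnorm_eq_norm_endo_of_mat: "opnorm M = norm (endo_of_mat M)"
  by (simp add: opnorm_def norm_endo_def norm_blinfun.rep_eq)

lemma mat_commute_iff_endo_of_mat:
  "M ** N = N ** M \<longleftrightarrow> endo_of_mat M * endo_of_mat N = endo_of_mat N * endo_of_mat M"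
  by (simp flip: endo_of_mat_mult add: endo_of_mat_inject)

lemma endo_of_mat_opow: "endo_of_mat (opow M n) = endo_of_mat M ^ n"
  by (induction n) (simp_all add: endo_of_mat_one endo_of_mat_mult)

lemma mexp_sums: "(\<lambda>n. (1 / fact n) *\<^sub>R opow M n) sums mexp M"
  and endo_of_mat_mexp: "endo_of_mat (mexp M) = exp (endo_of_mat M)"
proof -
  have exp_sums: "(\<lambda>n. endo_of_mat M ^ n /\<^sub>R fact n) sums exp (endo_of_mat M)"
    unfolding exp_def by (rule summable_sums [OF summable_exp_generic])
  have terms: "endo_of_mat M ^ n /\<^sub>R fact n = endo_of_mat ((1 / fact n) *\<^sub>R opow M n)" for n
    by (simp add: endo_of_mat_scaleR endo_of_mat_opow inverse_eq_divide)
  from bounded_linear.sums [OF bounded_linear_mat_of_endo exp_sums]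
  have "(\<lambda>n. (1 / fact n) *\<^sub>R opow M n) sums mat_of_endo (exp (endo_of_mat M))"
    by (simp only: terms mat_of_endo_of_mat)
  then show sums: "(\<lambda>n. (1 / fact n) *\<^sub>R opow M n) sums mexp M"
    by (simp add: mexp_def sums_iff)
  from bounded_linear.sums [OF bounded_linear_endo_of_mat sums]
  have "(\<lambda>n. endo_of_mat M ^ n /\<^sub>R fact n) sums endo_of_mat (mexp M)"
    by (simp only: terms)
  then show "endo_of_mat (mexp M) = exp (endo_of_mat M)"
    using exp_sums sums_unique2 by blast
qed

section \<open>Scalars, adjoints and unitarity\<close>

lemma csmul_mult_left: "csmul c M ** N = csmul c (M ** N)"
  and csmul_mult_right: "M ** csmul c N = csmul c (M ** N)"
  by (simp_all add: vec_eq_iff csmul_def matrix_matrix_mult_def sum_distrib_left mult_ac)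

lemma csmul_csmul: "csmul c (csmul c' M) = csmul (c * c') M"
  by (simp add: vec_eq_iff csmul_def mult.assoc)

lemma csmul_add: "csmul c (M + N) = csmul c M + csmul c N"
  and csmul_minus_left: "csmul (- c) M = - csmul c M"
  by (simp_all add: vec_eq_iff csmul_def distrib_left)

lemma norm_vector_smult: "norm (c *s x) = cmod c * norm (x :: complex ^ 'n)"
  by (simp add: norm_vec_def L2_set_def norm_mult power_mult_distrib
      real_sqrt_mult flip: sum_distrib_left)

lemma opnorm_csmul_le: "opnorm (csmul c M) \<le> cmod c * opnorm M"
  unfolding opnorm_def
proof (rule onorm_le)
  fix x
  have "csmul c M *v x = c *s (M *v x)"
    by (simp add: vec_eq_iff csmul_def matrix_vector_mult_def sum_distrib_left mult.assoc)
  moreover have "norm (M *v x) \<le> onorm (\<lambda>x. M *v x) * norm x"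
    by (rule onorm [OF bounded_linear_matrix_vector_mult])
  ultimately show "norm (csmul c M *v x) \<le> cmod c * onorm (\<lambda>x. M *v x) * norm x"
    by (simp add: norm_vector_smult mult.assoc mult_left_mono)
qed

lemma adj_add: "adj (M + N) = adj M + adj N"
  and adj_scaleR: "adj (r *\<^sub>R M) = r *\<^sub>R adj M"
  and adj_mult: "adj (M ** N) = adj N ** adj M"
  and adj_mat_1: "adj (mat 1) = mat 1"
  and adj_sum: "adj (sum f S) = (\<Sum>x\<in>S. adj (f x))"
  and adj_csmul: "adj (csmul c M) = csmul (cnj c) (adj M)"
  by (auto simp: vec_eq_iff adj_def matrix_matrix_mult_def mat_def csmul_def mult.commute)

lemma adj_opow: "adj (opow M n) = opow (adj M) n"
proof (induction n)
  case (Suc n)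
  have "opow M n ** M = M ** opow M n" for M :: "('a, 'b) op"
    by (induction n) (simp_all add: matrix_mul_assoc [symmetric])
  with Suc show ?case
    by (simp add: adj_mult)
qed (simp add: adj_mat_1)

lemma adj_mexp: "adj (mexp M) = mexp (adj M)"
proof -
  have "bounded_linear (adj :: ('v::finite, 'q::finite) op \<Rightarrow> _)"
    using linear_conv_bounded_linear linearI adj_add adj_scaleR by blast
  from bounded_linear.sums [OF this mexp_sums]
  have "(\<lambda>n. (1 / fact n) *\<^sub>R opow (adj M) n) sums adj (mexp M)"
    by (simp add: adj_scaleR adj_opow)
  then show ?thesis
    using mexp_sums sums_unique2 by blast
qed

lemma inner_matrix_vector_mult_adj: "inner (M *v x) y = inner x (adj M *v y)"
proof -
  have inner_complex: "inner z w = Re (z * cnj w)" for z w :: complex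
    by (simp add: inner_complex_def)
  have "inner (M *v x) y = Re (\<Sum>i\<in>UNIV. \<Sum>j\<in>UNIV. M $ i $ j * x $ j * cnj (y $ i))"
    by (simp add: inner_vec_def inner_complex matrix_vector_mult_def sum_distrib_right Re_sum)
  also have "\<dots> = Re (\<Sum>j\<in>UNIV. \<Sum>i\<in>UNIV. M $ i $ j * x $ j * cnj (y $ i))"
    by (subst sum.swap) simp
  also have "\<dots> = inner x (adj M *v y)"
    by (simp add: inner_vec_def inner_complex matrix_vector_mult_def adj_def
        sum_distrib_left Re_sum mult_ac)
  finally show ?thesis .
qed

lemma opnorm_unitary_le_1:
  assumes "adj U ** U = mat 1"
  shows "opnorm U \<le> 1"
  unfolding opnorm_def
proof (rule onorm_le)
  fix x
  have "inner (U *v x) (U *v x) = inner x x"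
    by (simp add: inner_matrix_vector_mult_adj matrix_vector_mul_assoc assms)
  then show "norm (U *v x) \<le> 1 * norm x"
    by (simp add: norm_eq_sqrt_inner)
qed

lemma norm_exp_skew_adjoint_le_1:
  assumes "adj K = - K"
  shows "norm (exp (endo_of_mat K)) \<le> 1"
proof -
  have "endo_of_mat (adj (mexp K) ** mexp K) = exp (- endo_of_mat K) * exp (endo_of_mat K)"
    by (simp add: adj_mexp assms endo_of_mat_mult endo_of_mat_mexp endo_of_mat_minus)
  also have "\<dots> = endo_of_mat (mat 1)"
    by (simp add: exp_minus_inverse [of "- endo_of_mat K", simplified] endo_of_mat_one)
  finally have "opnorm (mexp K) \<le> 1"
    by (intro opnorm_unitary_le_1) (simp add: endo_of_mat_inject)
  then show ?thesis
    by (simp add: opnorm_eq_norm_endo_of_mat endo_of_mat_mexp)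
qed

section \<open>Operators with disjoint supports commute\<close>

lemma local_op_vanishes:
  "local_op X A \<Longrightarrow> v \<notin> X \<Longrightarrow> \<sigma> v \<noteq> \<tau> v \<Longrightarrow> A $ \<sigma> $ \<tau> = 0"
  unfolding local_op_def by blast

lemma local_op_entry_cong:
  "local_op X A \<Longrightarrow> (\<And>v. v \<in> X \<Longrightarrow> \<sigma> v = \<sigma>' v \<and> \<tau> v = \<tau>' v) \<Longrightarrow>
    (\<And>v. v \<notin> X \<Longrightarrow> \<sigma> v = \<tau> v \<and> \<sigma>' v = \<tau>' v) \<Longrightarrow> A $ \<sigma> $ \<tau> = A $ \<sigma>' $ \<tau>'"
  unfolding local_op_def by blast

text \<open>Only one intermediate configuration contributes to an entry of the product: it follows
  \<open>\<tau>\<close> on the support of the first factor and \<open>\<sigma>\<close> elsewhere.\<close>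

lemma local_op_mult_entry:
  assumes A: "local_op X A" and P: "local_op Z P" and disj: "X \<inter> Z = {}"
  shows "(A ** P) $ \<sigma> $ \<tau> = A $ \<sigma> $ override_on \<sigma> \<tau> X * P $ override_on \<sigma> \<tau> X $ \<tau>"
proof -
  let ?\<rho> = "override_on \<sigma> \<tau> X"
  have "A $ \<sigma> $ \<rho> * P $ \<rho> $ \<tau> = 0" if "\<rho> \<noteq> ?\<rho>" for \<rho>
  proof -
    from that obtain v where v: "\<rho> v \<noteq> ?\<rho> v"
      by auto
    show ?thesis
    proof (cases "v \<in> X")
      case True
      with v disj have "P $ \<rho> $ \<tau> = 0"
        by (intro local_op_vanishes [OF P, of v]) auto
      then show ?thesis
        by simp
    next
      case False
      with v have "A $ \<sigma> $ \<rho> = 0"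
        by (intro local_op_vanishes [OF A, of v]) auto
      then show ?thesis
        by simp
    qed
  qed
  then have "(\<Sum>\<rho>\<in>UNIV. A $ \<sigma> $ \<rho> * P $ \<rho> $ \<tau>) = (\<Sum>\<rho>\<in>{?\<rho>}. A $ \<sigma> $ \<rho> * P $ \<rho> $ \<tau>)"
    by (intro sum.mono_neutral_right) auto
  then show ?thesis
    by (simp add: matrix_matrix_mult_def)
qed

lemma local_op_disjoint_commute:
  assumes A: "local_op X A" and P: "local_op Z P" and disj: "X \<inter> Z = {}"
  shows "A ** P = P ** A"
proof -
  have "(A ** P) $ \<sigma> $ \<tau> = (P ** A) $ \<sigma> $ \<tau>" for \<sigma> \<tau>
  proof -
    let ?\<rho> = "override_on \<sigma> \<tau> X" and ?\<rho>' = "override_on \<sigma> \<tau> Z"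
    have AP: "(A ** P) $ \<sigma> $ \<tau> = A $ \<sigma> $ ?\<rho> * P $ ?\<rho> $ \<tau>"
      by (rule local_op_mult_entry [OF A P disj])
    have PA: "(P ** A) $ \<sigma> $ \<tau> = P $ \<sigma> $ ?\<rho>' * A $ ?\<rho>' $ \<tau>"
      using disj by (intro local_op_mult_entry [OF P A]) auto
    show ?thesis
    proof (cases "\<exists>v. v \<notin> X \<and> v \<notin> Z \<and> \<sigma> v \<noteq> \<tau> v")
      case True
      then obtain v where "v \<notin> X" "v \<notin> Z" "\<sigma> v \<noteq> \<tau> v"
        by blast
      then have "P $ ?\<rho> $ \<tau> = 0" and "A $ ?\<rho>' $ \<tau> = 0"
        by (auto intro: local_op_vanishes [OF P] local_op_vanishes [OF A])
      then show ?thesis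
        by (simp add: AP PA)
    next
      case False
      then have "A $ \<sigma> $ ?\<rho> = A $ ?\<rho>' $ \<tau>"
        using disj by (intro local_op_entry_cong [OF A]) (auto simp: override_on_def)
      moreover have "P $ ?\<rho> $ \<tau> = P $ \<sigma> $ ?\<rho>'"
        using False disj by (intro local_op_entry_cong [OF P]) (auto simp: override_on_def)
      ultimately show ?thesis
        by (simp add: AP PA mult.commute)
    qed
  qed
  then show ?thesis
    by (simp add: vec_eq_iff)
qed

section \<open>Dynamics of a commuting interaction\<close>

definition dyn_gen :: "('v::finite set \<Rightarrow> ('v, 'q::finite) op) \<Rightarrow> 'v set set \<Rightarrow> real \<Rightarrow>
    (complex ^ ('v \<Rightarrow> 'q)) endo" where
  "dyn_gen \<Psi> S t = endo_of_mat (csmul (\<i> * complex_of_real t) (sum \<Psi> S))"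

lemma endo_of_mat_dyn:
  "endo_of_mat (dyn \<Psi> L t A) =
    exp (dyn_gen \<Psi> {Z. Z \<subseteq> L} t) * endo_of_mat A * exp (- dyn_gen \<Psi> {Z. Z \<subseteq> L} t)"
  by (simp add: dyn_def dyn_gen_def ham_def endo_of_mat_mult endo_of_mat_mexp
      csmul_minus_left endo_of_mat_minus)

lemma dyn_gen_union:
  "S \<inter> T = {} \<Longrightarrow> dyn_gen \<Psi> (S \<union> T) t = dyn_gen \<Psi> S t + dyn_gen \<Psi> T t"
  by (simp add: dyn_gen_def sum.union_disjoint csmul_add endo_of_mat_add)

lemma dyn_gen_commute:
  assumes "commuting \<Psi>"
  shows "dyn_gen \<Psi> S t * dyn_gen \<Psi> T s = dyn_gen \<Psi> T s * dyn_gen \<Psi> S t"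
proof -
  have "sum \<Psi> S ** sum \<Psi> T = sum \<Psi> T ** sum \<Psi> S"
    unfolding mat_commute_iff_endo_of_mat endo_of_mat_sum using assms
    by (intro sum_mult_sum_commute) (simp add: commuting_def flip: mat_commute_iff_endo_of_mat)
  then show ?thesis
    by (simp add: dyn_gen_def csmul_mult_left csmul_mult_right csmul_csmul mult.commute
        flip: endo_of_mat_mult)
qed

lemma local_op_dyn_gen_commute:
  assumes "interaction \<Psi>" and "local_op X A" and "\<And>Z. Z \<in> S \<Longrightarrow> X \<inter> Z = {}"
  shows "endo_of_mat A * dyn_gen \<Psi> S t = dyn_gen \<Psi> S t * endo_of_mat A"
proof -
  have "A ** \<Psi> Z = \<Psi> Z ** A" if "Z \<in> S" for Z
    using local_op_disjoint_commute [OF assms(2)] assms(1,3) that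
    unfolding interaction_def by blast
  then have "endo_of_mat A * endo_of_mat (\<Psi> Z) = endo_of_mat (\<Psi> Z) * endo_of_mat A" if "Z \<in> S" for Z
    using that mat_commute_iff_endo_of_mat by blast
  then have "A ** sum \<Psi> S = sum \<Psi> S ** A"
    by (simp add: mat_commute_iff_endo_of_mat endo_of_mat_sum sum_distrib_left sum_distrib_right)
  then show ?thesis
    by (simp add: dyn_gen_def csmul_mult_left csmul_mult_right flip: endo_of_mat_mult)
qed

lemma norm_exp_dyn_gen_le_1:
  assumes "interaction \<Psi>"
  shows "norm (exp (r *\<^sub>R dyn_gen \<Psi> S t)) \<le> 1"
proof -
  let ?K = "r *\<^sub>R csmul (\<i> * complex_of_real t) (sum \<Psi> S)"
  have "adj (sum \<Psi> S) = sum \<Psi> S"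
    using assms by (simp add: adj_sum interaction_def self_adjoint_def)
  then have "adj ?K = - ?K"
    by (simp add: adj_scaleR adj_csmul csmul_minus_left)
  from norm_exp_skew_adjoint_le_1 [OF this] show ?thesis
    by (simp add: dyn_gen_def endo_of_mat_scaleR)
qed

lemma norm_dyn_gen_le: "norm (dyn_gen \<Psi> S t) \<le> \<bar>t\<bar> * (\<Sum>Z\<in>S. opnorm (\<Psi> Z))"
proof -
  have "norm (dyn_gen \<Psi> S t) \<le> \<bar>t\<bar> * opnorm (sum \<Psi> S)"
    using opnorm_csmul_le [of "\<i> * complex_of_real t" "sum \<Psi> S"]
    by (simp add: dyn_gen_def opnorm_eq_norm_endo_of_mat norm_mult)
  also have "opnorm (sum \<Psi> S) \<le> (\<Sum>Z\<in>S. opnorm (\<Psi> Z))"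
    by (simp add: opnorm_eq_norm_endo_of_mat endo_of_mat_sum norm_sum)
  finally show ?thesis
    by (simp add: mult_left_mono)
qed

lemma opnorm_dyn_diff_le:
  fixes \<Psi> :: "'v::finite set \<Rightarrow> ('v, 'q::finite) op"
  assumes "interaction \<Psi>" and "commuting \<Psi>" and "X \<subseteq> L'" and "local_op X A"
  shows "opnorm (dyn \<Psi> UNIV t A - dyn \<Psi> L' t A)
    \<le> 2 * opnorm A * \<bar>t\<bar> * (\<Sum>Z\<in>{Z. Z \<inter> X \<noteq> {} \<and> Z \<inter> (UNIV - L') \<noteq> {}}. opnorm (\<Psi> Z))"
proof -
  define interior_terms where "interior_terms = {Z. Z \<subseteq> L'}"
  define boundary_terms where "boundary_terms = {Z. Z \<inter> X \<noteq> {} \<and> Z \<inter> (UNIV - L') \<noteq> {}}"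
  define exterior_terms where "exterior_terms = {Z. \<not> Z \<subseteq> L' \<and> Z \<inter> X = {}}"
  let ?x = "dyn_gen \<Psi> interior_terms t" and ?y = "dyn_gen \<Psi> boundary_terms t"
    and ?z = "dyn_gen \<Psi> exterior_terms t"
  have partition: "{Z. Z \<subseteq> UNIV} = interior_terms \<union> boundary_terms \<union> exterior_terms"
    "interior_terms \<inter> boundary_terms = {}"
    "(interior_terms \<union> boundary_terms) \<inter> exterior_terms = {}"
    using assms(3) by (auto simp: interior_terms_def boundary_terms_def exterior_terms_def)
  then have split: "dyn_gen \<Psi> {Z. Z \<subseteq> UNIV} t = ?x + ?y + ?z"
    by (simp only: dyn_gen_union)
  have "?x * ?y = ?y * ?x" "?x * ?z = ?z * ?x" "?y * ?z = ?z * ?y"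
    using assms(2) by (simp_all add: dyn_gen_commute)
  moreover have "endo_of_mat A * ?z = ?z * endo_of_mat A"
    using assms(1,4) by (rule local_op_dyn_gen_commute) (auto simp: exterior_terms_def)
  moreover have "norm (exp (s *\<^sub>R ?x)) \<le> 1" "norm (exp (s *\<^sub>R ?y)) \<le> 1" for s
    using assms(1) by (simp_all add: norm_exp_dyn_gen_le_1)
  ultimately have "norm (endo_of_mat (dyn \<Psi> UNIV t A) - endo_of_mat (dyn \<Psi> L' t A))
      \<le> 2 * norm (endo_of_mat A) * norm ?y"
    unfolding endo_of_mat_dyn split interior_terms_def [symmetric] by (rule norm_exp_conj_perturbation_le)
  also have "\<dots> \<le> 2 * norm (endo_of_mat A) * (\<bar>t\<bar> * (\<Sum>Z\<in>boundary_terms. opnorm (\<Psi> Z)))"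
    by (intro mult_left_mono norm_dyn_gen_le) simp
  finally show ?thesis
    by (simp add: opnorm_eq_norm_endo_of_mat endo_of_mat_diff boundary_terms_def mult.assoc)
qed

lemma sum_sets_meeting_both_le:
  fixes w :: "'v::finite set \<Rightarrow> real"
  assumes nonneg: "\<And>Z. w Z \<ge> 0"
  shows "(\<Sum>Z\<in>{Z. Z \<inter> X \<noteq> {} \<and> Z \<inter> Y \<noteq> {}}. w Z)
    \<le> (\<Sum>x\<in>X. \<Sum>y\<in>Y. \<Sum>Z\<in>{Z. x \<in> Z \<and> y \<in> Z}. w Z)"
proof -
  define charge where "charge Z = (\<Sum>x\<in>X. \<Sum>y\<in>Y. if x \<in> Z \<and> y \<in> Z then w Z else 0)" for Z
  have charge_nonneg: "charge Z \<ge> 0" for Z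
    by (auto simp: charge_def nonneg intro!: sum_nonneg)
  have "w Z \<le> charge Z" if "Z \<inter> X \<noteq> {}" "Z \<inter> Y \<noteq> {}" for Z
  proof -
    from that obtain x y where "x \<in> Z \<inter> X" "y \<in> Z \<inter> Y"
      by blast
    then have "w Z = (if x \<in> Z \<and> y \<in> Z then w Z else 0)"
      by simp
    also have "\<dots> \<le> (\<Sum>y\<in>Y. if x \<in> Z \<and> y \<in> Z then w Z else 0)"
      using \<open>y \<in> Z \<inter> Y\<close> by (intro member_le_sum) (auto simp: nonneg)
    also have "\<dots> \<le> charge Z"
      unfolding charge_def using \<open>x \<in> Z \<inter> X\<close>
      by (intro member_le_sum) (auto simp: nonneg intro!: sum_nonneg)
    finally show ?thesis .
  qed
  then have "(\<Sum>Z\<in>{Z. Z \<inter> X \<noteq> {} \<and> Z \<inter> Y \<noteq> {}}. w Z) \<le> (\<Sum>Z\<in>{Z. Z \<inter> X \<noteq> {} \<and> Z \<inter> Y \<noteq> {}}. charge Z)"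
    by (intro sum_mono) auto
  also have "\<dots> \<le> (\<Sum>Z\<in>UNIV. charge Z)"
    by (intro sum_mono2 charge_nonneg) auto
  also have "\<dots> = (\<Sum>x\<in>X. \<Sum>y\<in>Y. \<Sum>Z\<in>{Z. x \<in> Z \<and> y \<in> Z}. w Z)"
    unfolding charge_def by (subst sum.swap, subst sum.swap) (simp add: sum.If_cases)
  finally show ?thesis .
qed

lemma sum_sets_containing_pair_le_F_norm:
  assumes "decaying F" and "\<forall>x y. d x y \<ge> 0"
  shows "(\<Sum>Z\<in>{Z. x \<in> Z \<and> y \<in> Z}. opnorm (\<Psi> Z)) \<le> F_norm \<Psi> d F * F (d x y)"
proof -
  have "(\<Sum>Z\<in>{Z. x \<in> Z \<and> y \<in> Z}. opnorm (\<Psi> Z)) / F (d x y) \<le> F_norm \<Psi> d F"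
    unfolding F_norm_def by (rule Max_ge) (auto intro!: image_eqI [where x = "(x, y)"])
  moreover have "F (d x y) > 0"
    using assms unfolding decaying_def by blast
  ultimately show ?thesis
    by (simp add: pos_divide_le_eq)
qed

theorem theorem3p7:
  fixes \<Psi> :: "'v::finite set \<Rightarrow> ('v, 'q::finite) op"
    and d :: "'v \<Rightarrow> 'v \<Rightarrow> real"
  assumes "interaction \<Psi>" and "commuting \<Psi>"
    and "\<forall>x y. d x y \<ge> 0"
  shows "(\<forall>X L' A t. X \<subseteq> L' \<longrightarrow> local_op X A \<longrightarrow>
            opnorm (dyn \<Psi> UNIV t A - dyn \<Psi> L' t A)
              \<le> 2 * opnorm A * \<bar>t\<bar> *
                 (\<Sum>Z\<in>{Z. Z \<inter> X \<noteq> {} \<and> Z \<inter> (UNIV - L') \<noteq> {}}. opnorm (\<Psi> Z)))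
       \<and> (\<forall>F. decaying F \<longrightarrow>
           (\<forall>X L' A t. X \<subseteq> L' \<longrightarrow> local_op X A \<longrightarrow>
            opnorm (dyn \<Psi> UNIV t A - dyn \<Psi> L' t A)
              \<le> 2 * opnorm A * F_norm \<Psi> d F * \<bar>t\<bar> *
                 (\<Sum>x\<in>X. \<Sum>y\<in>UNIV - L'. F (d x y))))"
proof (intro conjI allI impI)
  fix X L' t and A :: "('v, 'q) op"
  assume "X \<subseteq> L'" "local_op X A"
  then show "opnorm (dyn \<Psi> UNIV t A - dyn \<Psi> L' t A)
      \<le> 2 * opnorm A * \<bar>t\<bar> * (\<Sum>Z\<in>{Z. Z \<inter> X \<noteq> {} \<and> Z \<inter> (UNIV - L') \<noteq> {}}. opnorm (\<Psi> Z))"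
    by (rule opnorm_dyn_diff_le [OF assms(1,2)])
next
  fix F X L' t and A :: "('v, 'q) op"
  assume F: "decaying F" and "X \<subseteq> L'" "local_op X A"
  then have "opnorm (dyn \<Psi> UNIV t A - dyn \<Psi> L' t A)
      \<le> 2 * opnorm A * \<bar>t\<bar> * (\<Sum>Z\<in>{Z. Z \<inter> X \<noteq> {} \<and> Z \<inter> (UNIV - L') \<noteq> {}}. opnorm (\<Psi> Z))"
    by (intro opnorm_dyn_diff_le [OF assms(1,2)])
  also have "\<dots> \<le> 2 * opnorm A * \<bar>t\<bar> *
      (\<Sum>x\<in>X. \<Sum>y\<in>UNIV - L'. F_norm \<Psi> d F * F (d x y))"
    by (intro mult_left_mono order_trans [OF sum_sets_meeting_both_le] sum_mono
        sum_sets_containing_pair_le_F_norm [OF F assms(3)])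
      (simp_all add: opnorm_eq_norm_endo_of_mat)
  finally show "opnorm (dyn \<Psi> UNIV t A - dyn \<Psi> L' t A)
      \<le> 2 * opnorm A * F_norm \<Psi> d F * \<bar>t\<bar> * (\<Sum>x\<in>X. \<Sum>y\<in>UNIV - L'. F (d x y))"
    by (simp add: sum_distrib_left mult_ac)
qed

end
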